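(* Let $q_{XUVZ}$ be a joint distribution on $\{0,1\}^3\times\mathcal Z$ ($\mathcal Z$ finite), and let $(X^{1:N},U^{1:N},V^{1:N},Z^{1:N})$ be distributed according to $\prod_{i=1}^Nq_{XUVZ}$. Fix $\xi>0$, let $\delta_{\mathcal A}(N)=\log(11)\sqrt{\tfrac2N(3+\log N)}$, $\epsilon_1=2(\delta_{\mathcal A}(N)+\xi)$, and let $r_X=N(H(X|UZ)-\epsilon_1/2)$, $r_U=N(H(U|Z)-\epsilon_1/2)$, $r_V=N(H(V|UZX)-\epsilon_1/2)$ (assumed to be integers). Let $G_X:\{0,1\}^N\to\{0,1\}^{r_X}$, $G_U:\{0,1\}^N\to\{0,1\}^{r_U}$, $G_V:\{0,1\}^N\to\{0,1\}^{r_V}$ be chosen independently and uniformly at random from families of two-universal hash functions, independently of $(X^{1:N},U^{1:N},V^{1:N},Z^{1:N})$, and let $q_{G_X(X^{1:N})G_U(U^{1:N})G_V(V^{1:N})Z^{1:N}}$ denote the resulting joint distribution of the hash outputs and $Z^{1:N}$. Let $p^{unif}_{\bar E},p^{unif}_{\bar D},p^{unif}_{\bar F}$ be the uniform distributions on $\{0,1\}^{r_X},\{0,1\}^{r_U},\{0,1\}^{r_V}$. Then $$\mathbb V\big(q_{G_X(X^{1:N})G_U(U^{1:N})G_V(V^{1:N})Z^{1:N}},\,p^{unif}_{\bar E}p^{unif}_{\bar D}p^{unif}_{\bar F}q_{Z^{1:N}}\big)\le \frac2N+\sqrt7\cdot2^{-N\xi/2}.$$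
   Context: $\mathbb V(p,q)=\sum_x|p(x)-q(x)|$; $\log$ is base 2; $q_{Z^{1:N}}=\prod_{i=1}^Nq_Z$. In the paper, $q_{XUVZ}$ arises from independent binary $X,U,V$ and $Z$ generated through a channel from $(X,\max(U,V))$. *)

theory Defs
  imports "HOL-Library.FuncSet" Complex_Main
begin

definition is_pmf :: "('a::finite \<Rightarrow> real) \<Rightarrow> bool" where
  "is_pmf q \<longleftrightarrow> (\<forall>w. 0 \<le> q w) \<and> (\<Sum>w\<in>UNIV. q w) = 1"

definition prob_of :: "('a::finite \<Rightarrow> real) \<Rightarrow> ('a \<Rightarrow> 'b) \<Rightarrow> 'b \<Rightarrow> real" where
  "prob_of q f y = (\<Sum>w | f w = y. q w)"

text \<open>Conditional entropy H(f|g) (log base 2, with 0 log 0 = 0).\<close>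
definition cond_entropy :: "('a::finite \<Rightarrow> real) \<Rightarrow> ('a \<Rightarrow> 'b) \<Rightarrow> ('a \<Rightarrow> 'c) \<Rightarrow> real" where
  "cond_entropy q f g =
     - (\<Sum>(a, b) \<in> (\<lambda>w. (f w, g w)) ` UNIV.
          prob_of q (\<lambda>w. (f w, g w)) (a, b) *
          log 2 (prob_of q (\<lambda>w. (f w, g w)) (a, b) / prob_of q g b))"

definition compX :: "bool \<times> bool \<times> bool \<times> 'z \<Rightarrow> bool" where "compX w = fst w"
definition compU :: "bool \<times> bool \<times> bool \<times> 'z \<Rightarrow> bool" where "compU w = fst (snd w)"
definition compV :: "bool \<times> bool \<times> bool \<times> 'z \<Rightarrow> bool" where "compV w = fst (snd (snd w))"
definition compZ :: "bool \<times> bool \<times> bool \<times> 'z \<Rightarrow> 'z" where "compZ w = snd (snd (snd w))"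

definition bitstrings :: "nat \<Rightarrow> bool list set" where
  "bitstrings n = {xs. length xs = n}"

text \<open>A (finite, nonempty) two-universal family of hash functions {0,1}^N -> {0,1}^r,
  the functions being taken extensionally on {0,1}^N.\<close>
definition two_universal :: "nat \<Rightarrow> nat \<Rightarrow> (bool list \<Rightarrow> bool list) set \<Rightarrow> bool" where
  "two_universal N r F \<longleftrightarrow> F \<noteq> {} \<and> F \<subseteq> (bitstrings N \<rightarrow>\<^sub>E bitstrings r) \<and>
     (\<forall>x\<in>bitstrings N. \<forall>x'\<in>bitstrings N. x \<noteq> x' \<longrightarrow>
        real (card {g\<in>F. g x = g x'}) \<le> real (card F) / 2 ^ r)"

definition iid :: "('a \<Rightarrow> real) \<Rightarrow> 'a list \<Rightarrow> real" where
  "iid q s = prod_list (map q s)"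

text \<open>Joint distribution of (G_X(X^{1:N}), G_U(U^{1:N}), G_V(V^{1:N}), Z^{1:N}), where the
  hash functions are drawn uniformly and independently from FX, FU, FV (and marginalised).\<close>
definition hashed_dist ::
  "nat \<Rightarrow> (bool \<times> bool \<times> bool \<times> 'z::finite \<Rightarrow> real) \<Rightarrow> (bool list \<Rightarrow> bool list) set \<Rightarrow>
   (bool list \<Rightarrow> bool list) set \<Rightarrow> (bool list \<Rightarrow> bool list) set \<Rightarrow>
   bool list \<times> bool list \<times> bool list \<times> 'z list \<Rightarrow> real" where
  "hashed_dist N q FX FU FV = (\<lambda>(e, d, f, zs).
     (\<Sum>gX\<in>FX. \<Sum>gU\<in>FU. \<Sum>gV\<in>FV. \<Sum>s\<in>{s. length s = N}.
        (if gX (map compX s) = e \<and> gU (map compU s) = d \<and> gV (map compV s) = f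
            \<and> map compZ s = zs then iid q s else 0))
     / (real (card FX) * real (card FU) * real (card FV)))"

definition ideal_dist ::
  "nat \<Rightarrow> (bool \<times> bool \<times> bool \<times> 'z::finite \<Rightarrow> real) \<Rightarrow> nat \<Rightarrow> nat \<Rightarrow> nat \<Rightarrow>
   bool list \<times> bool list \<times> bool list \<times> 'z list \<Rightarrow> real" where
  "ideal_dist N q rX rU rV = (\<lambda>(e, d, f, zs).
     (if e \<in> bitstrings rX \<and> d \<in> bitstrings rU \<and> f \<in> bitstrings rV \<and> length zs = N
      then iid (prob_of q compZ) zs / 2 ^ (rX + rU + rV) else 0))"

text \<open>Variational distance V(p,q) = sum |p - q| over a finite set S containing both supports.\<close>
definition var_dist :: "('a \<Rightarrow> real) \<Rightarrow> ('a \<Rightarrow> real) \<Rightarrow> 'a set \<Rightarrow> real" where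
  "var_dist p p' S = (\<Sum>x\<in>S. \<bar>p x - p' x\<bar>)"

definition delta_A :: "nat \<Rightarrow> real" where
  "delta_A N = log 2 11 * sqrt (2 / real N * (3 + log 2 (real N)))"

end

(* Split the law of the sample into a typical part, on which the conditional probabilities
   P(x|u,z), P(u|z) and P(v|x,u,z) of (X^N, U^N, V^N, Z^N) are at most 2^-(r + N xi) for the
   respective output lengths r, and an atypical rest.  On the typical part the collision
   argument of the leftover hash lemma applies: the excess collision probability of two
   samples under the random triple of hash functions splits according to the nonempty set
   of coordinates in which the samples agree, each of these seven sets contributes at most
   2^-(N xi), and the AM-GM form of Cauchy-Schwarz turns this second-moment bound into the
   L1 bound sqrt 7 * 2^-(N xi / 2).  The atypical part costs twice its mass.  Since
   r + N xi = N (H - delta_A N), an exponential Markov bound on the i.i.d. product of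
   conditional probabilities shows that each of the three atypical events has probability
   at most e^-3 / N, hence the mass is at most 1 / N. *)

theory Submission
  imports Defs
begin

lemma exp_minus_le_quadratic:
  fixes x :: real
  assumes "0 \<le> x"
  shows "exp (- x) \<le> 1 - x + x\<^sup>2 / 2"
proof -
  obtain t where t: "exp (- x) = (\<Sum>m<3. (- x) ^ m / fact m) + exp t / fact 3 * (- x) ^ 3"
    using Maclaurin_exp_le[of "- x" 3] by blast
  have "(\<Sum>m<3. (- x) ^ m / fact m) = 1 - x + x\<^sup>2 / 2"
    by (simp add: eval_nat_numeral fact_numeral)
  moreover have "exp t / fact 3 * (- x) ^ 3 \<le> 0"
    using assms by (simp add: mult_nonneg_nonpos)
  ultimately show ?thesis
    using t by linarith
qed

lemma mult_ln_squared_le_1: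
  fixes p :: real
  assumes "0 < p" "p \<le> 1"
  shows "p * (ln p)\<^sup>2 \<le> 1"
proof -
  define s where "s = p powr (1 / 4)"
  have s: "0 < s" "s \<le> 1"
    using assms by (simp_all add: s_def powr_le1)
  have p_eq: "p = s ^ 4"
    using assms unfolding s_def by (simp add: powr_powr flip: powr_realpow)
  have "- ln s \<le> 1 / s - 1"
    using ln_le_minus_one[of "1 / s"] s by (simp add: ln_div)
  moreover have "0 \<le> - ln s"
    using s by simp
  ultimately have "(- ln s)\<^sup>2 \<le> ((1 - s) / s)\<^sup>2"
    using s by (intro power_mono) (auto simp: field_simps)
  then have "p * (ln p)\<^sup>2 \<le> 16 * s ^ 4 * ((1 - s) / s)\<^sup>2"
    using s by (simp add: p_eq ln_realpow power_mult_distrib)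
  also have "\<dots> = (4 * s * (1 - s))\<^sup>2"
    using s by (simp add: field_simps power2_eq_square eval_nat_numeral)
  also have "\<dots> \<le> 1"
  proof -
    have "0 \<le> (2 * s - 1)\<^sup>2"
      by simp
    have "0 \<le> 4 * s * (1 - s)" "4 * s * (1 - s) \<le> 1"
      using s \<open>0 \<le> (2 * s - 1)\<^sup>2\<close> by (auto simp: power2_eq_square algebra_simps)
    then show ?thesis
      by (simp add: power_le_one)
  qed
  finally show ?thesis .
qed

lemma abs_le_half_plus_square:
  fixes a W :: real
  assumes "0 < W"
  shows "\<bar>a\<bar> \<le> W / 2 + a\<^sup>2 / (2 * W)"
proof -
  have "0 \<le> (\<bar>a\<bar> - W)\<^sup>2"
    by simp
  then show ?thesis
    using assms by (simp add: field_simps power2_eq_square)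
qed

lemma sum_if_const: "(\<Sum>a\<in>A. if P then f a else 0) = (if P then sum f A else 0)"
  by simp

lemma if_conj_zero: "(if A \<and> B then a else 0) = (if A then if B then a else 0 else 0)"
  by simp

lemma sum_if_eq_le:
  fixes f :: "'a \<Rightarrow> real"
  assumes "finite A" "a0 \<in> A" "\<And>a. a \<in> A \<Longrightarrow> 0 \<le> f a"
    and "e \<Longrightarrow> f a0 \<le> c * S" and "\<not> e \<Longrightarrow> sum f A \<le> S"
  shows "(\<Sum>a\<in>A. if e \<longrightarrow> a0 = a then f a else 0) \<le> (if e then c else 1) * S"
  using assms by (cases e) simp_all

lemma sum_triple: "(\<Sum>t\<in>A \<times> B \<times> C. f t) = (\<Sum>x\<in>A. \<Sum>u\<in>B. \<Sum>v\<in>C. f (x, u, v))"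
  by (simp add: sum.cartesian_product)

lemma sum_quadruple:
  "(\<Sum>(a, b, c, d)\<in>A \<times> B \<times> C \<times> D. f (a, b, c) d) = (\<Sum>t\<in>A \<times> B \<times> C. \<Sum>d\<in>D. f t d)"
  unfolding sum.cartesian_product[symmetric] prod.case by (simp only: sum_triple)

lemma sum_rotate3:
  "(\<Sum>a\<in>A. \<Sum>b\<in>B. \<Sum>c\<in>C. f a b c) = (\<Sum>b\<in>B. \<Sum>c\<in>C. \<Sum>a\<in>A. f a b c)"
  by (subst sum.swap) (intro sum.cong refl sum.swap)

lemma sum_fiber_deviation_squared:
  fixes p :: "'t \<Rightarrow> real" and h :: "'t \<Rightarrow> 'y"
  assumes "finite T" "finite Y" "h ` T \<subseteq> Y"
  shows "(\<Sum>y\<in>Y. ((\<Sum>t\<in>T. if h t = y then p t else 0) - sum p T / card Y)\<^sup>2)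
       = (\<Sum>t\<in>T. \<Sum>t'\<in>T. if h t = h t' then p t * p t' else 0) - (sum p T)\<^sup>2 / card Y"
proof -
  let ?A = "\<lambda>y. \<Sum>t\<in>T. if h t = y then p t else 0"
  have sum_A: "(\<Sum>y\<in>Y. ?A y) = sum p T"
    using assms by (subst sum.swap) (auto intro!: sum.cong)
  have "(\<Sum>y\<in>Y. (?A y)\<^sup>2) = (\<Sum>t\<in>T. \<Sum>t'\<in>T. \<Sum>y\<in>Y. if h t = y \<and> h t' = y then p t * p t' else 0)"
    unfolding power2_eq_square sum_product
    by (subst sum.swap, rule sum.cong, simp, subst sum.swap) (auto intro!: sum.cong)
  also have "\<dots> = (\<Sum>t\<in>T. \<Sum>t'\<in>T. if h t = h t' then p t * p t' else 0)"
  proof (intro sum.cong refl)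
    fix t t' assume "t \<in> T"
    have "(\<Sum>y\<in>Y. if h t = y \<and> h t' = y then p t * p t' else 0)
        = (\<Sum>y\<in>Y. if h t = h t' then if h t = y then p t * p t' else 0 else 0)"
      by (rule sum.cong) auto
    then show "(\<Sum>y\<in>Y. if h t = y \<and> h t' = y then p t * p t' else 0)
        = (if h t = h t' then p t * p t' else 0)"
      using assms \<open>t \<in> T\<close> by (auto simp: sum_if_const)
  qed
  finally have sum_A2: "(\<Sum>y\<in>Y. (?A y)\<^sup>2) = \<dots>" .
  let ?c = "sum p T / card Y"
  have square_expand: "(\<Sum>y\<in>Y. (a y - c)\<^sup>2) = (\<Sum>y\<in>Y. (a y)\<^sup>2) - 2 * c * (\<Sum>y\<in>Y. a y) + card Y * c\<^sup>2"
    for a :: "'y \<Rightarrow> real" and c :: real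
    by (simp add: power2_diff sum.distrib sum_subtractf sum_distrib_left sum_distrib_right mult_ac)
  have "(\<Sum>y\<in>Y. (?A y - ?c)\<^sup>2) = (\<Sum>y\<in>Y. (?A y)\<^sup>2) - 2 * ?c * (\<Sum>y\<in>Y. ?A y) + card Y * ?c\<^sup>2"
    by (rule square_expand)
  also have "\<dots> = (\<Sum>t\<in>T. \<Sum>t'\<in>T. if h t = h t' then p t * p t' else 0) - (sum p T)\<^sup>2 / card Y"
    unfolding sum_A sum_A2 using assms
    by (cases "Y = {}") (auto simp: power2_eq_square)
  finally show ?thesis .
qed

lemma finite_lists_length: "finite {s :: 'a::finite list. length s = N}"
  using finite_lists_length_eq[of "UNIV :: 'a set" N] by simp

lemma lists_length_Suc_filter:
  "{s. length s = Suc n \<and> P s} = (\<lambda>(a, t). a # t) ` {(a, t). length t = n \<and> P (a # t)}"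
  by (auto simp: length_Suc_conv image_iff)

lemma inj_on_Cons_pair: "inj_on (\<lambda>(a, t). a # t) A"
  by (auto simp: inj_on_def)

lemma sum_prod_list_lists_length:
  fixes h :: "'a::finite \<Rightarrow> real"
  shows "(\<Sum>s | length s = N. prod_list (map h s)) = (\<Sum>w\<in>UNIV. h w) ^ N"
proof (induction N)
  case 0
  then show ?case by simp
next
  case (Suc n)
  have lists: "{s. length s = Suc n} = (\<lambda>(a, t). a # t) ` (UNIV \<times> {t. length t = n})"
    using lists_length_Suc_filter[of n "\<lambda>_. True"] by auto
  have "(\<Sum>s | length s = Suc n. prod_list (map h s))
      = (\<Sum>(a, t)\<in>UNIV \<times> {t. length t = n}. h a * prod_list (map h t))"
    unfolding lists by (subst sum.reindex[OF inj_on_Cons_pair]) (simp add: case_prod_unfold)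
  also have "\<dots> = (\<Sum>a\<in>UNIV. h a) * (\<Sum>t | length t = n. prod_list (map h t))"
    by (simp add: sum_product sum.cartesian_product)
  finally show ?case
    using Suc by simp
qed

lemma sum_iid_fiber:
  fixes q :: "'a::finite \<Rightarrow> real"
  shows "(\<Sum>t | length t = N \<and> map f t = y. iid q t)
         = (if length y = N then iid (prob_of q f) y else 0)"
proof (induction N arbitrary: y)
  case 0
  then show ?case
    by (cases y) (auto simp: iid_def)
next
  case (Suc n)
  show ?case
  proof (cases y)
    case Nil
    then show ?thesis
      by (simp add: sum.neutral)
  next
    case (Cons b y')
    have lists: "{t. length t = Suc n \<and> map f t = y}
        = (\<lambda>(a, t). a # t) ` ({a. f a = b} \<times> {t. length t = n \<and> map f t = y'})"
      using lists_length_Suc_filter[of n "\<lambda>t. map f t = y"] Cons by auto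
    have "(\<Sum>t | length t = Suc n \<and> map f t = y. iid q t)
        = (\<Sum>(a, t)\<in>{a. f a = b} \<times> {t. length t = n \<and> map f t = y'}. q a * iid q t)"
      unfolding lists by (subst sum.reindex[OF inj_on_Cons_pair]) (simp add: case_prod_unfold iid_def)
    also have "\<dots> = prob_of q f b * (\<Sum>t | length t = n \<and> map f t = y'. iid q t)"
      by (simp add: sum_product sum.cartesian_product prob_of_def)
    finally show ?thesis
      using Suc Cons by (simp add: iid_def)
  qed
qed

lemma map_pair_eq_iff:
  "map (\<lambda>w. (f w, g w)) t = map (\<lambda>w. (f w, g w)) s \<longleftrightarrow> map f t = map f s \<and> map g t = map g s"
proof (induction t arbitrary: s)
  case (Cons a t)
  then show ?case
    by (cases s) auto
qed auto

lemma prob_of_injective: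
  assumes "inj h"
  shows "prob_of q h (h w) = q w"
proof -
  have "{w'. h w' = h w} = {w}"
    using assms by (auto dest: injD)
  then show ?thesis
    by (simp add: prob_of_def)
qed

section \<open>Concentration of the conditional probability of an i.i.d. sample\<close>

lemma delta_A_pos:
  assumes "1 \<le> N"
  shows "0 < delta_A N"
proof -
  have "0 \<le> log 2 (real N)"
    using assms by simp
  then have "0 < 3 + log 2 (real N)"
    by linarith
  moreover have "0 < 2 / real N"
    using assms by simp
  ultimately have "0 < 2 / real N * (3 + log 2 (real N))"
    by simp
  then show ?thesis
    unfolding delta_A_def by simp
qed

lemma delta_A_exponent_ge:
  assumes "1 \<le> N"
  shows "3 + ln (real N) \<le> real N * (ln 2 * delta_A N)\<^sup>2 / 4"
proof -
  define L where "L = log 2 (real N)"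
  have "0 \<le> L" "ln (real N) \<le> L"
    using assms ln_le_minus_one[of 2] by (simp_all add: L_def log_def field_simps mult_left_le)
  have "exp 2 = exp 1 * (exp 1 :: real)"
    by (simp flip: exp_add)
  also have "\<dots> \<le> 3 * 3"
    using exp_le by (intro mult_mono) auto
  finally have "2 \<le> ln (11::real)"
    by (simp add: ln_ge_iff)
  then have ln_11: "4 \<le> (ln (11::real))\<^sup>2"
    using power_mono[of 2 "ln (11::real)" 2] by simp
  have "3 + ln (real N) \<le> 2 * (3 + L)"
    using \<open>0 \<le> L\<close> \<open>ln (real N) \<le> L\<close> by (simp add: algebra_simps)
  also have "\<dots> \<le> (ln (11::real))\<^sup>2 * (3 + L) / 2"
    using mult_right_mono[OF ln_11, of "3 + L"] \<open>0 \<le> L\<close> by simp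
  also have "\<dots> = real N * (ln 2 * delta_A N)\<^sup>2 / 4"
    using assms \<open>0 \<le> L\<close>
    by (simp add: delta_A_def L_def power_mult_distrib log_def field_simps)
  finally show ?thesis .
qed

locale cond_pmf =
  fixes q :: "'a::finite \<Rightarrow> real" and f :: "'a \<Rightarrow> bool" and g :: "'a \<Rightarrow> 'c::finite"
  assumes pmf: "is_pmf q"
begin

definition joint :: "bool \<times> 'c \<Rightarrow> real" where
  "joint = prob_of q (\<lambda>w. (f w, g w))"

definition marg :: "'c \<Rightarrow> real" where
  "marg = prob_of q g"

definition cond_prob :: "'a \<Rightarrow> real" where
  "cond_prob w = joint (f w, g w) / marg (g w)"

lemma q_nonneg: "0 \<le> q w"
  using pmf by (simp add: is_pmf_def)

lemma sum_q: "(\<Sum>w\<in>UNIV. q w) = 1"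
  using pmf by (simp add: is_pmf_def)

lemma joint_nonneg: "0 \<le> joint y"
  unfolding joint_def prob_of_def by (intro sum_nonneg q_nonneg)

lemma marg_nonneg: "0 \<le> marg b"
  unfolding marg_def prob_of_def by (intro sum_nonneg q_nonneg)

lemma joint_le_marg: "joint (a, b) \<le> marg b"
  unfolding joint_def marg_def prob_of_def by (rule sum_mono2) (auto simp: q_nonneg)

lemma q_le_joint: "q w \<le> joint (f w, g w)"
  unfolding joint_def prob_of_def
  using member_le_sum[of w "{x. (f x, g x) = (f w, g w)}" q] q_nonneg by auto

lemma cond_prob_pos: "0 < q w \<Longrightarrow> 0 < cond_prob w"
  unfolding cond_prob_def using q_le_joint[of w] joint_le_marg[of "f w" "g w"] by auto

lemma cond_prob_le_1: "cond_prob w \<le> 1"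
  unfolding cond_prob_def using joint_le_marg[of "f w" "g w"] joint_nonneg marg_nonneg[of "g w"]
  by (cases "marg (g w) = 0") (auto simp: divide_le_eq_1)

lemma joint_eq_cond_prob_mult: "joint (f w, g w) = cond_prob w * marg (g w)"
  using joint_le_marg[of "f w" "g w"] joint_nonneg[of "(f w, g w)"] marg_nonneg[of "g w"]
  by (cases "marg (g w) = 0") (simp_all add: cond_prob_def)

lemma sum_marg: "(\<Sum>b\<in>UNIV. marg b) = 1"
  using sum.group[of UNIV UNIV g q] sum_q by (simp add: marg_def prob_of_def)

lemma expectation_by_joint:
  "(\<Sum>w\<in>UNIV. q w * h (f w, g w)) = (\<Sum>y\<in>(\<lambda>w. (f w, g w)) ` UNIV. joint y * h y)"
proof -
  have "(\<Sum>w\<in>UNIV. q w * h (f w, g w))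
      = (\<Sum>y\<in>(\<lambda>w. (f w, g w)) ` UNIV. \<Sum>w | (f w, g w) = y. q w * h y)"
    by (subst sum.image_gen[of UNIV _ "\<lambda>w. (f w, g w)"]) (auto intro!: sum.cong)
  then show ?thesis
    by (simp add: joint_def prob_of_def sum_distrib_right)
qed

lemma expectation_minus_ln_cond_prob:
  "(\<Sum>w\<in>UNIV. q w * - ln (cond_prob w)) = ln 2 * cond_entropy q f g"
proof -
  have "(\<Sum>w\<in>UNIV. q w * - ln (cond_prob w))
      = (\<Sum>w\<in>UNIV. q w * (\<lambda>(a, b). - ln (joint (a, b) / marg b)) (f w, g w))"
    by (simp add: cond_prob_def)
  also have "\<dots> = (\<Sum>y\<in>(\<lambda>w. (f w, g w)) ` UNIV. joint y * (\<lambda>(a, b). - ln (joint (a, b) / marg b)) y)"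
    by (rule expectation_by_joint)
  also have "\<dots> = ln 2 * cond_entropy q f g"
    unfolding cond_entropy_def mult_minus_right sum_distrib_left sum_negf[symmetric]
    by (rule sum.cong) (auto simp: joint_def marg_def log_def)
  finally show ?thesis .
qed

lemma expectation_ln_cond_prob_squared_le: "(\<Sum>w\<in>UNIV. q w * (ln (cond_prob w))\<^sup>2) \<le> 2"
proof -
  have "(\<Sum>w\<in>UNIV. q w * (ln (cond_prob w))\<^sup>2)
      = (\<Sum>y\<in>(\<lambda>w. (f w, g w)) ` UNIV. joint y * (\<lambda>(a, b). (ln (joint (a, b) / marg b))\<^sup>2) y)"
    using expectation_by_joint[of "\<lambda>(a, b). (ln (joint (a, b) / marg b))\<^sup>2"]
    by (simp add: cond_prob_def)
  also have "\<dots> \<le> (\<Sum>y\<in>(\<lambda>w. (f w, g w)) ` UNIV. marg (snd y))"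
  proof (rule sum_mono, clarify)
    fix a b
    show "joint (a, b) * (ln (joint (a, b) / marg b))\<^sup>2 \<le> marg (snd (a, b))"
    proof (cases "joint (a, b) = 0")
      case True
      then show ?thesis
        using marg_nonneg by simp
    next
      case False
      define r where "r = joint (a, b) / marg b"
      have "0 < joint (a, b)"
        using False joint_nonneg[of "(a, b)"] by simp
      then have r: "0 < r" "r \<le> 1" and marg_pos: "0 < marg b"
        using joint_le_marg[of a b] by (auto simp: r_def)
      have "joint (a, b) * (ln r)\<^sup>2 = marg b * (r * (ln r)\<^sup>2)"
        using marg_pos by (simp add: r_def)
      also have "\<dots> \<le> marg b"
        using mult_ln_squared_le_1[OF r] marg_pos by (simp add: mult_left_le)
      finally show ?thesis
        by (simp add: r_def)
    qed
  qed
  also have "\<dots> \<le> (\<Sum>y\<in>(UNIV :: (bool \<times> 'c) set). marg (snd y))"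
    by (rule sum_mono2) (auto simp: marg_nonneg)
  also have "\<dots> = (\<Sum>a\<in>(UNIV :: bool set). \<Sum>b\<in>UNIV. marg b)"
    unfolding sum.cartesian_product UNIV_Times_UNIV[symmetric] by (simp add: case_prod_unfold)
  also have "\<dots> = 2"
    by (simp add: sum_marg)
  finally show ?thesis .
qed

text \<open>Apply \<open>exp (- x) \<le> 1 - x + x\<^sup>2 / 2\<close> to \<open>x = - \<beta> * ln (cond_prob w)\<close>: the mean of
  \<open>- ln (cond_prob w)\<close> is \<open>ln 2 * cond_entropy q f g\<close> and its second moment is at most 2.\<close>

lemma expectation_cond_prob_powr_le:
  assumes "0 \<le> \<beta>"
  shows "(\<Sum>w\<in>UNIV. q w * cond_prob w powr \<beta>) \<le> exp (- \<beta> * (ln 2 * cond_entropy q f g) + \<beta>\<^sup>2)"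
proof -
  have "(\<Sum>w\<in>UNIV. q w * cond_prob w powr \<beta>)
      \<le> (\<Sum>w\<in>UNIV. q w * (1 - \<beta> * - ln (cond_prob w) + \<beta>\<^sup>2 / 2 * (ln (cond_prob w))\<^sup>2))"
  proof (rule sum_mono)
    fix w
    show "q w * cond_prob w powr \<beta> \<le> q w * (1 - \<beta> * - ln (cond_prob w) + \<beta>\<^sup>2 / 2 * (ln (cond_prob w))\<^sup>2)"
    proof (cases "q w = 0")
      case False
      then have "0 < q w" "0 < cond_prob w"
        using q_nonneg[of w] cond_prob_pos[of w] by auto
      moreover have "0 \<le> \<beta> * - ln (cond_prob w)"
        using assms cond_prob_le_1[of w] \<open>0 < cond_prob w\<close> by (simp add: mult_nonneg_nonpos)
      ultimately show ?thesis
        using exp_minus_le_quadratic[of "\<beta> * - ln (cond_prob w)"]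
        by (simp add: powr_def power_mult_distrib)
    qed simp
  qed
  also have "\<dots> = (\<Sum>w\<in>UNIV. q w) - \<beta> * (\<Sum>w\<in>UNIV. q w * - ln (cond_prob w))
      + \<beta>\<^sup>2 / 2 * (\<Sum>w\<in>UNIV. q w * (ln (cond_prob w))\<^sup>2)"
    by (simp add: algebra_simps sum.distrib sum_subtractf sum_distrib_left sum_negf)
  also have "\<dots> = 1 - \<beta> * (ln 2 * cond_entropy q f g)
      + \<beta>\<^sup>2 / 2 * (\<Sum>w\<in>UNIV. q w * (ln (cond_prob w))\<^sup>2)"
    by (simp only: sum_q expectation_minus_ln_cond_prob)
  also have "\<dots> \<le> 1 - \<beta> * (ln 2 * cond_entropy q f g) + \<beta>\<^sup>2"
    using mult_left_mono[OF expectation_ln_cond_prob_squared_le, of "\<beta>\<^sup>2 / 2"] by simp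
  also have "\<dots> \<le> exp (- \<beta> * (ln 2 * cond_entropy q f g) + \<beta>\<^sup>2)"
    using exp_ge_add_one_self[of "- \<beta> * (ln 2 * cond_entropy q f g) + \<beta>\<^sup>2"] by linarith
  finally show ?thesis .
qed

lemma iid_nonneg: "0 \<le> iid q s"
  unfolding iid_def by (intro prod_list_nonneg) (auto simp: q_nonneg)

lemma iid_cond_prob_tail_markov:
  assumes "0 < \<beta>"
  shows "(\<Sum>s | length s = N \<and> 2 powr (- k) < prod_list (map cond_prob s). iid q s)
         \<le> 2 powr (k * \<beta>) * (\<Sum>w\<in>UNIV. q w * cond_prob w powr \<beta>) ^ N"
proof -
  let ?F = "\<lambda>s. iid q s * (prod_list (map cond_prob s) powr \<beta> * 2 powr (k * \<beta>))"
  have "(\<Sum>s | length s = N \<and> 2 powr (- k) < prod_list (map cond_prob s). iid q s)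
      \<le> (\<Sum>s | length s = N \<and> 2 powr (- k) < prod_list (map cond_prob s). ?F s)"
  proof (rule sum_mono)
    fix s assume "s \<in> {s. length s = N \<and> 2 powr (- k) < prod_list (map cond_prob s)}"
    then have "(2 powr (- k)) powr \<beta> \<le> prod_list (map cond_prob s) powr \<beta>"
      using assms by (intro powr_mono2) auto
    then have "2 powr (- k * \<beta>) \<le> prod_list (map cond_prob s) powr \<beta>"
      by (simp add: powr_powr)
    then have "1 \<le> prod_list (map cond_prob s) powr \<beta> * 2 powr (k * \<beta>)"
      by (simp add: powr_minus field_simps)
    then show "iid q s \<le> ?F s"
      using iid_nonneg[of s] by (simp add: mult_le_cancel_left1)
  qed
  also have "\<dots> \<le> (\<Sum>s | length s = N. ?F s)"
    by (rule sum_mono2) (auto simp: finite_lists_length iid_nonneg)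
  also have "\<dots> = 2 powr (k * \<beta>) * (\<Sum>s | length s = N. prod_list (map (\<lambda>w. q w * cond_prob w powr \<beta>) s))"
  proof -
    have "?F s = 2 powr (k * \<beta>) * prod_list (map (\<lambda>w. q w * cond_prob w powr \<beta>) s)" for s
      by (induction s) (simp_all add: iid_def powr_mult mult_ac)
    then show ?thesis
      by (simp only: sum_distrib_left)
  qed
  finally show ?thesis
    by (simp add: sum_prod_list_lists_length)
qed

lemma iid_cond_prob_tail_le:
  assumes "1 \<le> N"
  shows "(\<Sum>s | length s = N \<and> 2 powr (- (real N * (cond_entropy q f g - delta_A N)))
                                  < prod_list (map cond_prob s). iid q s)
         \<le> exp (- 3) / real N"
proof -
  define H where "H = cond_entropy q f g"
  define \<delta> where "\<delta> = delta_A N"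
  \<comment> \<open>This choice of \<open>\<beta>\<close> turns the Markov exponent into \<open>- N * \<beta>\<^sup>2\<close>.\<close>
  define \<beta> where "\<beta> = ln 2 * \<delta> / 2"
  have "0 < \<beta>"
    using delta_A_pos[OF assms] by (simp add: \<beta>_def \<delta>_def)
  have "(\<Sum>s | length s = N \<and> 2 powr (- (real N * (H - \<delta>))) < prod_list (map cond_prob s). iid q s)
      \<le> 2 powr (real N * (H - \<delta>) * \<beta>) * (\<Sum>w\<in>UNIV. q w * cond_prob w powr \<beta>) ^ N"
    by (rule iid_cond_prob_tail_markov[OF \<open>0 < \<beta>\<close>])
  also have "\<dots> \<le> 2 powr (real N * (H - \<delta>) * \<beta>) * (exp (- \<beta> * (ln 2 * H) + \<beta>\<^sup>2)) ^ N"
    using expectation_cond_prob_powr_le[of \<beta>] \<open>0 < \<beta>\<close>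
    by (intro mult_left_mono power_mono) (auto simp: H_def intro!: sum_nonneg mult_nonneg_nonneg q_nonneg)
  also have "\<dots> = exp (real N * (H - \<delta>) * \<beta> * ln 2 + real N * (- \<beta> * (ln 2 * H) + \<beta>\<^sup>2))"
    by (simp add: powr_def exp_of_nat_mult[symmetric] exp_add[symmetric] mult_ac)
  also have "real N * (H - \<delta>) * \<beta> * ln 2 + real N * (- \<beta> * (ln 2 * H) + \<beta>\<^sup>2) = - (real N * \<beta>\<^sup>2)"
    by (simp add: \<beta>_def power2_eq_square field_simps)
  also have "exp (- (real N * \<beta>\<^sup>2)) \<le> exp (- 3 - ln (real N))"
  proof -
    have "3 + ln (real N) \<le> real N * \<beta>\<^sup>2"
      using delta_A_exponent_ge[OF assms] by (simp add: \<beta>_def \<delta>_def power_divide)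
    then show ?thesis
      by simp
  qed
  also have "\<dots> = exp (- 3) / real N"
    using assms by (simp add: exp_diff)
  finally show ?thesis
    by (simp add: H_def \<delta>_def)
qed

lemma iid_joint_tail_le:
  assumes "1 \<le> N"
  shows "(\<Sum>s | length s = N \<and> 2 powr (- (real N * (cond_entropy q f g - delta_A N)))
                 * prod_list (map (\<lambda>w. marg (g w)) s) < prod_list (map (\<lambda>w. joint (f w, g w)) s).
           iid q s)
         \<le> exp (- 3) / real N"
proof -
  let ?a = "2 powr (- (real N * (cond_entropy q f g - delta_A N)))"
  have prod_joint: "prod_list (map (\<lambda>w. joint (f w, g w)) s)
      = prod_list (map cond_prob s) * prod_list (map (\<lambda>w. marg (g w)) s)" for s
    by (induction s) (simp_all add: joint_eq_cond_prob_mult)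
  have "0 \<le> prod_list (map (\<lambda>w. marg (g w)) s)" for s
    by (intro prod_list_nonneg) (auto simp: marg_nonneg)
  then have "?a * prod_list (map (\<lambda>w. marg (g w)) s) < prod_list (map (\<lambda>w. joint (f w, g w)) s)
      \<Longrightarrow> ?a < prod_list (map cond_prob s)" for s
    unfolding prod_joint by (meson mult_right_mono not_le)
  then have "(\<Sum>s | length s = N \<and> ?a * prod_list (map (\<lambda>w. marg (g w)) s)
                 < prod_list (map (\<lambda>w. joint (f w, g w)) s). iid q s)
      \<le> (\<Sum>s | length s = N \<and> ?a < prod_list (map cond_prob s). iid q s)"
    by (intro sum_mono2) (auto intro: finite_subset[OF _ finite_lists_length] simp: iid_nonneg)
  also have "\<dots> \<le> exp (- 3) / real N"
    by (rule iid_cond_prob_tail_le[OF assms])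
  finally show ?thesis .
qed

end

section \<open>Universal hashing of three correlated sources\<close>

fun agree :: "bool \<times> bool \<times> bool \<Rightarrow> 'x \<times> 'u \<times> 'v \<Rightarrow> 'x \<times> 'u \<times> 'v \<Rightarrow> bool" where
  "agree (eX, eU, eV) (x, u, v) (x', u', v') \<longleftrightarrow> (eX \<longrightarrow> x = x') \<and> (eU \<longrightarrow> u = u') \<and> (eV \<longrightarrow> v = v')"

fun coincide :: "'x \<times> 'u \<times> 'v \<Rightarrow> 'x \<times> 'u \<times> 'v \<Rightarrow> bool \<times> bool \<times> bool" where
  "coincide (x, u, v) (x', u', v') = (x = x', u = u', v = v')"

fun flag_prod :: "bool \<times> bool \<times> bool \<Rightarrow> real \<times> real \<times> real \<Rightarrow> real" where
  "flag_prod (eX, eU, eV) (a, b, c)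
    = (if eX then a else 1) * (if eU then b else 1) * (if eV then c else 1)"

lemma flag_prod_nonneg: "0 \<le> a \<Longrightarrow> 0 \<le> b \<Longrightarrow> 0 \<le> c \<Longrightarrow> 0 \<le> flag_prod e (a, b, c)"
  by (cases e) simp

lemma flag_prod_mult:
  "flag_prod e (a, b, c) * flag_prod e (a', b', c') = flag_prod e (a * a', b * b', c * c')"
  by (cases e) simp

lemma nonzero_flags_eq:
  "- {(False, False, False)} = {(True, True, True), (True, True, False), (True, False, True),
     (True, False, False), (False, True, True), (False, True, False), (False, False, True)}"
  by auto

lemma card_nonzero_flags: "card (- {(False, False, False)}) = 7"
  unfolding nonzero_flags_eq by simp

lemma flag_prod_coincide_le:
  assumes "0 \<le> a" "0 \<le> b" "0 \<le> c"
  shows "flag_prod (coincide t t') (a, b, c) - 1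
    \<le> (\<Sum>e \<in> - {(False, False, False)}. if agree e t t' then flag_prod e (a, b, c) else 0)"
proof -
  obtain x u v x' u' v' where "t = (x, u, v)" "t' = (x', u', v')"
    by (cases t, cases t') auto
  moreover have products: "0 \<le> a * b" "0 \<le> a * c" "0 \<le> b * c"
    using assms by simp_all
  ultimately show ?thesis
    using assms unfolding nonzero_flags_eq
    by (cases "x = x'"; cases "u = u'"; cases "v = v'"; simp; use products in linarith)
qed

lemma flag_prod_le:
  assumes "e \<noteq> (False, False, False)" "0 \<le> \<epsilon>" "\<epsilon> \<le> 1"
  shows "flag_prod e (\<epsilon>, \<epsilon>, \<epsilon>) \<le> \<epsilon>"
proof -
  have "\<epsilon> * \<epsilon> \<le> \<epsilon>"
    using assms by (simp add: mult_left_le)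
  moreover have "\<epsilon> * \<epsilon> * \<epsilon> \<le> \<epsilon>"
    using assms \<open>\<epsilon> * \<epsilon> \<le> \<epsilon>\<close> by (meson mult_left_le order_trans mult_nonneg_nonneg)
  ultimately show ?thesis
    using assms by (cases e) auto
qed

definition universal_family :: "'a set \<Rightarrow> 'b set \<Rightarrow> nat \<Rightarrow> ('a \<Rightarrow> 'b) set \<Rightarrow> bool" where
  "universal_family A B r F \<longleftrightarrow> finite F \<and> F \<noteq> {} \<and> (\<forall>g\<in>F. g ` A \<subseteq> B) \<and> finite B \<and> card B = 2 ^ r \<and>
     (\<forall>x\<in>A. \<forall>x'\<in>A. x \<noteq> x' \<longrightarrow> real (card {g\<in>F. g x = g x'}) \<le> real (card F) / 2 ^ r)"

lemma universal_family_collisions_le: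
  assumes "universal_family A B r F" "x \<in> A" "x' \<in> A"
  shows "real (card {g\<in>F. g x = g x'}) \<le> real (card F) / 2 ^ r * (if x = x' then 2 ^ r else 1)"
  using assms by (cases "x = x'") (auto simp: universal_family_def)

lemma two_universal_imp_universal_family:
  assumes "two_universal N r F"
  shows "universal_family (bitstrings N) (bitstrings r) r F"
proof -
  have card_bitstrings: "card (bitstrings n) = 2 ^ n" for n
    using card_lists_length_eq[of "UNIV :: bool set" n] by (simp add: bitstrings_def)
  have finite_bitstrings: "finite (bitstrings n)" for n
    unfolding bitstrings_def by (rule finite_lists_length)
  have F: "F \<subseteq> bitstrings N \<rightarrow>\<^sub>E bitstrings r"
    using assms by (simp add: two_universal_def)
  then have "finite F"
    by (rule finite_subset) (intro finite_PiE finite_bitstrings)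
  moreover have "\<forall>g\<in>F. g ` bitstrings N \<subseteq> bitstrings r"
    using F by (auto simp: PiE_def Pi_def)
  ultimately show ?thesis
    using assms by (simp add: universal_family_def two_universal_def card_bitstrings finite_bitstrings)
qed

text \<open>\<open>P\<close> is the joint law of \<open>((x, u, v), z)\<close> and \<open>QXUZ\<close>, \<open>QUZ\<close>, \<open>QZ\<close> are its
  marginals, so that \<open>typX\<close>, \<open>typU\<close>, \<open>typV\<close> bound the conditional probabilities
  \<open>P(x|u,z)\<close>, \<open>P(u|z)\<close>, \<open>P(v|x,u,z)\<close> by the thresholds \<open>aX\<close>, \<open>aU\<close>, \<open>aV\<close>.\<close>

locale three_universal_hashing =
  fixes Xs :: "'x set" and Us :: "'u set" and Vs :: "'v set" and Zs :: "'z set"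
    and Ox :: "'ox set" and Ou :: "'ou set" and Ov :: "'ov set"
    and FX :: "('x \<Rightarrow> 'ox) set" and FU :: "('u \<Rightarrow> 'ou) set" and FV :: "('v \<Rightarrow> 'ov) set"
    and rX rU rV :: nat and \<theta> :: real and P :: "('x \<times> 'u \<times> 'v) \<times> 'z \<Rightarrow> real"
  assumes finite_Xs: "finite Xs" and finite_Us: "finite Us" and finite_Vs: "finite Vs"
    and finite_Zs: "finite Zs"
    and P_nonneg: "\<And>w. 0 \<le> P w"
    and sum_P: "(\<Sum>w\<in>(Xs \<times> Us \<times> Vs) \<times> Zs. P w) = 1"
    and universal_X: "universal_family Xs Ox rX FX"
    and universal_U: "universal_family Us Ou rU FU"
    and universal_V: "universal_family Vs Ov rV FV"
    and \<theta>_nonneg: "0 \<le> \<theta>"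
begin

definition "Src = Xs \<times> Us \<times> Vs"
definition "Out = Ox \<times> Ou \<times> Ov"
definition "Fam = FX \<times> FU \<times> FV"

definition hash3 :: "('x \<Rightarrow> 'ox) \<times> ('u \<Rightarrow> 'ou) \<times> ('v \<Rightarrow> 'ov) \<Rightarrow> 'x \<times> 'u \<times> 'v \<Rightarrow> 'ox \<times> 'ou \<times> 'ov" where
  "hash3 g = map_prod (fst g) (map_prod (fst (snd g)) (snd (snd g)))"

definition "QXUZ x u z = (\<Sum>v\<in>Vs. P ((x, u, v), z))"
definition "QUZ u z = (\<Sum>x\<in>Xs. QXUZ x u z)"
definition "QZ z = (\<Sum>u\<in>Us. QUZ u z)"

definition "aX = 2 powr - (real rX + \<theta>)"
definition "aU = 2 powr - (real rU + \<theta>)"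
definition "aV = 2 powr - (real rV + \<theta>)"

definition "typX x u z \<longleftrightarrow> QXUZ x u z \<le> aX * QUZ u z"
definition "typU u z \<longleftrightarrow> QUZ u z \<le> aU * QZ z"
definition "typV x u v z \<longleftrightarrow> P ((x, u, v), z) \<le> aV * QXUZ x u z"

definition typical :: "('x \<times> 'u \<times> 'v) \<times> 'z \<Rightarrow> bool" where
  "typical w \<longleftrightarrow> (case w of ((x, u, v), z) \<Rightarrow> typX x u z \<and> typU u z \<and> typV x u v z)"

definition "P_typ w = (if typical w then P w else 0)"
definition "P_atyp w = (if typical w then 0 else P w)"

definition "QXUZ_typ x u z = (if typX x u z \<and> typU u z then QXUZ x u z else 0)"
definition "QUZ_typ u z = (if typU u z then QUZ u z else 0)"

definition "typ_hash g y z = (\<Sum>t\<in>Src. if hash3 g t = y then P_typ (t, z) else 0)"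
definition "typ_mass z = (\<Sum>t\<in>Src. P_typ (t, z))"
definition "atyp_hash g y z = (\<Sum>t\<in>Src. if hash3 g t = y then P_atyp (t, z) else 0)"
definition "atyp_mass z = (\<Sum>t\<in>Src. P_atyp (t, z))"

definition "hashed_mass y z = (\<Sum>g\<in>Fam. \<Sum>t\<in>Src. if hash3 g t = y then P (t, z) else 0) / card Fam"

lemma finite_Src: "finite Src"
  using finite_Xs finite_Us finite_Vs by (simp add: Src_def)

lemma finite_Out: "finite Out"
  using universal_X universal_U universal_V by (simp add: Out_def universal_family_def)

lemma card_Out: "card Out = 2 ^ (rX + rU + rV)"
  using universal_X universal_U universal_V
  by (simp add: Out_def universal_family_def card_cartesian_product power_add)

lemma finite_Fam: "finite Fam"
  using universal_X universal_U universal_V by (simp add: Fam_def universal_family_def)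

lemma card_Fam_pos: "0 < card Fam"
  using universal_X universal_U universal_V
  by (simp add: Fam_def universal_family_def card_cartesian_product card_gt_0_iff)

lemma hash3_in_Out: "g \<in> Fam \<Longrightarrow> t \<in> Src \<Longrightarrow> hash3 g t \<in> Out"
  using universal_X universal_U universal_V
  by (auto simp: Fam_def Src_def Out_def hash3_def universal_family_def image_subset_iff)

lemma sum_Out_hash:
  assumes "g \<in> Fam"
  shows "(\<Sum>y\<in>Out. \<Sum>t\<in>Src. if hash3 g t = y then p t else 0) = sum p Src"
  using hash3_in_Out[OF assms] finite_Out by (subst sum.swap) simp

lemma QXUZ_nonneg: "0 \<le> QXUZ x u z"
  unfolding QXUZ_def by (intro sum_nonneg P_nonneg)

lemma QUZ_nonneg: "0 \<le> QUZ u z"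
  unfolding QUZ_def by (intro sum_nonneg QXUZ_nonneg)

lemma QZ_nonneg: "0 \<le> QZ z"
  unfolding QZ_def by (intro sum_nonneg QUZ_nonneg)

lemma QZ_eq_sum_Src: "QZ z = (\<Sum>t\<in>Src. P (t, z))"
  unfolding QZ_def QUZ_def QXUZ_def Src_def sum_triple by (rule sum.swap)

lemma sum_QZ: "(\<Sum>z\<in>Zs. QZ z) = 1"
  unfolding QZ_eq_sum_Src by (subst sum.swap) (simp add: sum.cartesian_product Src_def sum_P)

lemma QXUZ_eq_filter:
  assumes "x \<in> Xs" "u \<in> Us" "z \<in> Zs"
  shows "QXUZ x u z
    = (\<Sum>w\<in>Src \<times> Zs. if (case w of ((x', u', v), z') \<Rightarrow> (x', u', z') = (x, u, z)) then P w else 0)"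
  using assms finite_Xs finite_Us finite_Vs finite_Zs
  by (simp add: QXUZ_def Src_def sum.cartesian_product' sum_if_const if_conj_zero sum.swap[of _ Vs]
      cong: if_cong)

lemma QUZ_eq_filter:
  assumes "u \<in> Us" "z \<in> Zs"
  shows "QUZ u z = (\<Sum>w\<in>Src \<times> Zs. if (case w of ((x, u', v), z') \<Rightarrow> (u', z') = (u, z)) then P w else 0)"
  using assms finite_Xs finite_Us finite_Vs finite_Zs
  by (simp add: QUZ_def QXUZ_def Src_def sum.cartesian_product' sum_if_const if_conj_zero
      sum.swap[of _ Vs] cong: if_cong)

lemma QZ_eq_filter:
  assumes "z \<in> Zs"
  shows "QZ z = (\<Sum>w\<in>Src \<times> Zs. if snd w = z then P w else 0)"
  using assms finite_Zs
  by (simp add: QZ_eq_sum_Src sum.cartesian_product' sum_if_const cong: if_cong)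

lemma P_typ_nonneg: "0 \<le> P_typ w"
  using P_nonneg by (simp add: P_typ_def)

lemma P_atyp_nonneg: "0 \<le> P_atyp w"
  using P_nonneg by (simp add: P_atyp_def)

lemma P_typ_plus_P_atyp: "P_typ w + P_atyp w = P w"
  by (simp add: P_typ_def P_atyp_def)

lemma P_typ_eq:
  "P_typ ((x, u, v), z) = (if typX x u z \<and> typU u z \<and> typV x u v z then P ((x, u, v), z) else 0)"
  by (simp add: P_typ_def typical_def)

lemma sum_agree_v_le:
  assumes "v0 \<in> Vs"
  shows "(\<Sum>v\<in>Vs. if e \<longrightarrow> v0 = v then P_typ ((x, u, v), z) else 0) \<le> (if e then aV else 1) * QXUZ_typ x u z"
proof (rule sum_if_eq_le[OF finite_Vs assms P_typ_nonneg])
  show "P_typ ((x, u, v0), z) \<le> aV * QXUZ_typ x u z"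
    using QXUZ_nonneg[of x u z] by (auto simp: P_typ_eq QXUZ_typ_def typV_def aV_def)
  show "(\<Sum>v\<in>Vs. P_typ ((x, u, v), z)) \<le> QXUZ_typ x u z"
    by (auto simp: P_typ_eq QXUZ_typ_def QXUZ_def intro!: sum_mono P_nonneg)
qed

lemma sum_agree_x_le:
  assumes "x0 \<in> Xs"
  shows "(\<Sum>x\<in>Xs. if e \<longrightarrow> x0 = x then QXUZ_typ x u z else 0) \<le> (if e then aX else 1) * QUZ_typ u z"
proof (rule sum_if_eq_le[OF finite_Xs assms])
  show "0 \<le> QXUZ_typ x u z" for x
    by (simp add: QXUZ_typ_def QXUZ_nonneg)
  show "QXUZ_typ x0 u z \<le> aX * QUZ_typ u z"
    using QUZ_nonneg[of u z] by (auto simp: QXUZ_typ_def QUZ_typ_def typX_def aX_def)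
  show "(\<Sum>x\<in>Xs. QXUZ_typ x u z) \<le> QUZ_typ u z"
    by (auto simp: QXUZ_typ_def QUZ_typ_def QUZ_def intro!: sum_mono QXUZ_nonneg)
qed

lemma sum_agree_u_le:
  assumes "u0 \<in> Us"
  shows "(\<Sum>u\<in>Us. if e \<longrightarrow> u0 = u then QUZ_typ u z else 0) \<le> (if e then aU else 1) * QZ z"
proof (rule sum_if_eq_le[OF finite_Us assms])
  show "0 \<le> QUZ_typ u z" for u
    by (simp add: QUZ_typ_def QUZ_nonneg)
  show "QUZ_typ u0 z \<le> aU * QZ z"
    using QZ_nonneg[of z] by (auto simp: QUZ_typ_def typU_def aU_def)
  show "(\<Sum>u\<in>Us. QUZ_typ u z) \<le> QZ z"
    by (auto simp: QUZ_typ_def QZ_def intro!: sum_mono QUZ_nonneg)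
qed

text \<open>Summing out \<open>v\<close>, then \<open>x\<close>, then \<open>u\<close>, each coordinate on which the samples are
  required to agree costs the factor granted by the corresponding typicality condition.\<close>

lemma sum_agree_P_typ_le:
  assumes "t0 \<in> Src"
  shows "(\<Sum>t\<in>Src. if agree e t0 t then P_typ (t, z) else 0) \<le> flag_prod e (aX, aU, aV) * QZ z"
proof -
  obtain x0 u0 v0 where t0: "t0 = (x0, u0, v0)" "x0 \<in> Xs" "u0 \<in> Us" "v0 \<in> Vs"
    using assms by (auto simp: Src_def)
  obtain eX eU eV where e: "e = (eX, eU, eV)"
    by (cases e) auto
  let ?cX = "if eX then aX else 1" and ?cU = "if eU then aU else 1" and ?cV = "if eV then aV else 1"
  have "(\<Sum>v\<in>Vs. if agree e t0 (x, u, v) then P_typ ((x, u, v), z) else 0)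
      = (if eU \<longrightarrow> u0 = u then if eX \<longrightarrow> x0 = x then
           (\<Sum>v\<in>Vs. if eV \<longrightarrow> v0 = v then P_typ ((x, u, v), z) else 0) else 0 else 0)" for x u
    by (auto simp: t0(1) e)
  then have "(\<Sum>t\<in>Src. if agree e t0 t then P_typ (t, z) else 0)
      = (\<Sum>u\<in>Us. if eU \<longrightarrow> u0 = u then (\<Sum>x\<in>Xs. if eX \<longrightarrow> x0 = x then
           (\<Sum>v\<in>Vs. if eV \<longrightarrow> v0 = v then P_typ ((x, u, v), z) else 0) else 0) else 0)"
    unfolding Src_def sum_triple by (subst sum.swap) (simp add: sum_if_const)
  also have "\<dots> \<le> (\<Sum>u\<in>Us. if eU \<longrightarrow> u0 = u then
      (\<Sum>x\<in>Xs. if eX \<longrightarrow> x0 = x then ?cV * QXUZ_typ x u z else 0) else 0)"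
    using sum_agree_v_le[OF t0(4), where e = eV] by (intro sum_mono) (auto intro!: sum_mono)
  also have "\<dots> = ?cV * (\<Sum>u\<in>Us. if eU \<longrightarrow> u0 = u then
      (\<Sum>x\<in>Xs. if eX \<longrightarrow> x0 = x then QXUZ_typ x u z else 0) else 0)"
    by (simp add: sum_distrib_left if_distrib cong: if_cong)
  also have "\<dots> \<le> ?cV * (\<Sum>u\<in>Us. if eU \<longrightarrow> u0 = u then ?cX * QUZ_typ u z else 0)"
    using sum_agree_x_le[OF t0(2), where e = eX] by (intro mult_left_mono sum_mono) (auto simp: aV_def)
  also have "\<dots> = ?cV * ?cX * (\<Sum>u\<in>Us. if eU \<longrightarrow> u0 = u then QUZ_typ u z else 0)"
    by (simp add: sum_distrib_left if_distrib mult.assoc cong: if_cong)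
  also have "\<dots> \<le> ?cV * ?cX * (?cU * QZ z)"
    using sum_agree_u_le[OF t0(3), where e = eU] by (intro mult_left_mono) (auto simp: aV_def aX_def)
  also have "\<dots> = flag_prod e (aX, aU, aV) * QZ z"
    by (simp add: e)
  finally show ?thesis .
qed

lemma typ_mass_nonneg: "0 \<le> typ_mass z"
  unfolding typ_mass_def by (intro sum_nonneg P_typ_nonneg)

lemma typ_mass_le_QZ: "typ_mass z \<le> QZ z"
  unfolding typ_mass_def QZ_eq_sum_Src
  using P_typ_plus_P_atyp P_atyp_nonneg by (intro sum_mono) (metis le_add_same_cancel1)

lemma typ_hash_nonneg: "0 \<le> typ_hash g y z"
  unfolding typ_hash_def by (intro sum_nonneg) (simp add: P_typ_nonneg)

lemma typ_hash_le_typ_mass: "typ_hash g y z \<le> typ_mass z"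
  unfolding typ_hash_def typ_mass_def by (intro sum_mono) (simp add: P_typ_nonneg)

lemma card_hash3_collisions_le:
  assumes "t \<in> Src" "t' \<in> Src"
  shows "real (card {g\<in>Fam. hash3 g t = hash3 g t'})
    \<le> real (card Fam) / card Out * flag_prod (coincide t t') (2 ^ rX, 2 ^ rU, 2 ^ rV)"
proof -
  obtain x u v x' u' v' where t: "t = (x, u, v)" "t' = (x', u', v')"
    by (cases t, cases t') auto
  have mem: "x \<in> Xs" "u \<in> Us" "v \<in> Vs" "x' \<in> Xs" "u' \<in> Us" "v' \<in> Vs"
    using assms by (auto simp: Src_def t)
  have "{g\<in>Fam. hash3 g t = hash3 g t'}
      = {g\<in>FX. g x = g x'} \<times> {g\<in>FU. g u = g u'} \<times> {g\<in>FV. g v = g v'}"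
    by (auto simp: Fam_def hash3_def t)
  then have "real (card {g\<in>Fam. hash3 g t = hash3 g t'})
      = real (card {g\<in>FX. g x = g x'}) * real (card {g\<in>FU. g u = g u'}) * real (card {g\<in>FV. g v = g v'})"
    by (simp add: card_cartesian_product)
  also have "\<dots> \<le> (real (card FX) / 2 ^ rX * (if x = x' then 2 ^ rX else 1))
      * (real (card FU) / 2 ^ rU * (if u = u' then 2 ^ rU else 1))
      * (real (card FV) / 2 ^ rV * (if v = v' then 2 ^ rV else 1))"
    using universal_family_collisions_le[OF universal_X mem(1,4)]
      universal_family_collisions_le[OF universal_U mem(2,5)]
      universal_family_collisions_le[OF universal_V mem(3,6)]
    by (intro mult_mono) auto
  also have "\<dots> = real (card Fam) / card Out * flag_prod (coincide t t') (2 ^ rX, 2 ^ rU, 2 ^ rV)"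
    by (simp add: t Fam_def card_Out card_cartesian_product power_add)
  finally show ?thesis .
qed

lemma flag_prod_thresholds_le:
  assumes "e \<noteq> (False, False, False)"
  shows "flag_prod e (2 ^ rX, 2 ^ rU, 2 ^ rV) * flag_prod e (aX, aU, aV) \<le> 2 powr - \<theta>"
proof -
  have "2 ^ r * 2 powr - (real r + \<theta>) = 2 powr - \<theta>" for r :: nat
    by (simp add: powr_realpow[symmetric] powr_add[symmetric])
  moreover have "2 powr - \<theta> \<le> (1::real)"
    using powr_mono[of "- \<theta>" 0 "2::real"] \<theta>_nonneg by simp
  ultimately show ?thesis
    unfolding flag_prod_mult aX_def aU_def aV_def
    using flag_prod_le[OF assms, of "2 powr - \<theta>"] by simp
qed

lemma sum_typ_hash_deviation_squared_eq:
  "(\<Sum>g\<in>Fam. \<Sum>y\<in>Out. (typ_hash g y z - typ_mass z / card Out)\<^sup>2)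
    = (\<Sum>t\<in>Src. \<Sum>t'\<in>Src. P_typ (t, z) * P_typ (t', z) * card {g\<in>Fam. hash3 g t = hash3 g t'})
      - real (card Fam) / card Out * (typ_mass z)\<^sup>2"
proof -
  let ?p = "\<lambda>t. P_typ (t, z)"
  have "(\<Sum>g\<in>Fam. \<Sum>y\<in>Out. (typ_hash g y z - typ_mass z / card Out)\<^sup>2)
      = (\<Sum>g\<in>Fam. (\<Sum>t\<in>Src. \<Sum>t'\<in>Src. if hash3 g t = hash3 g t' then ?p t * ?p t' else 0)
          - (typ_mass z)\<^sup>2 / card Out)"
    unfolding typ_hash_def typ_mass_def
    using finite_Src finite_Out hash3_in_Out by (intro sum.cong refl sum_fiber_deviation_squared) auto
  also have "\<dots> = (\<Sum>t\<in>Src. \<Sum>t'\<in>Src. ?p t * ?p t' * card {g\<in>Fam. hash3 g t = hash3 g t'})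
      - real (card Fam) / card Out * (typ_mass z)\<^sup>2"
  proof -
    have "(\<Sum>g\<in>Fam. if hash3 g t = hash3 g t' then a else 0) = a * card {g\<in>Fam. hash3 g t = hash3 g t'}"
      for t t' and a :: real
      using finite_Fam by (simp add: sum.inter_filter[symmetric])
    then show ?thesis
      unfolding sum_subtractf by (subst sum_rotate3) simp
  qed
  finally show ?thesis .
qed

lemma sum_nonzero_flags_agree_le:
  assumes "t \<in> Src"
  shows "(\<Sum>e\<in>- {(False, False, False)}. flag_prod e (2 ^ rX, 2 ^ rU, 2 ^ rV)
      * (\<Sum>t'\<in>Src. if agree e t t' then P_typ (t', z) else 0)) \<le> 7 * 2 powr - \<theta> * QZ z"
proof -
  have "flag_prod e (2 ^ rX, 2 ^ rU, 2 ^ rV) * (\<Sum>t'\<in>Src. if agree e t t' then P_typ (t', z) else 0)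
      \<le> 2 powr - \<theta> * QZ z" if "e \<noteq> (False, False, False)" for e
  proof -
    have "flag_prod e (2 ^ rX, 2 ^ rU, 2 ^ rV) * (\<Sum>t'\<in>Src. if agree e t t' then P_typ (t', z) else 0)
        \<le> flag_prod e (2 ^ rX, 2 ^ rU, 2 ^ rV) * (flag_prod e (aX, aU, aV) * QZ z)"
      using sum_agree_P_typ_le[OF assms] by (intro mult_left_mono flag_prod_nonneg) simp_all
    also have "\<dots> \<le> 2 powr - \<theta> * QZ z"
      using flag_prod_thresholds_le[OF that] QZ_nonneg[of z]
      by (simp add: mult.assoc[symmetric] mult_right_mono)
    finally show ?thesis .
  qed
  then have "(\<Sum>e\<in>- {(False, False, False)}. flag_prod e (2 ^ rX, 2 ^ rU, 2 ^ rV)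
      * (\<Sum>t'\<in>Src. if agree e t t' then P_typ (t', z) else 0))
      \<le> (\<Sum>e\<in>- {(False, False, False)}. 2 powr - \<theta> * QZ z)"
    by (intro sum_mono) auto
  then show ?thesis
    by (simp add: card_nonzero_flags)
qed

text \<open>The collision estimate of the leftover hash lemma: the excess collision probability
  of two samples is split according to the nonempty set of coordinates in which they
  agree.\<close>

lemma typ_hash_deviation_squared_le:
  "(\<Sum>g\<in>Fam. \<Sum>y\<in>Out. (typ_hash g y z - typ_mass z / card Out)\<^sup>2)
    \<le> real (card Fam) / card Out * (7 * 2 powr - \<theta> * QZ z * typ_mass z)"
proof -
  let ?p = "\<lambda>t. P_typ (t, z)"
  let ?c = "real (card Fam) / card Out"
  let ?fp = "\<lambda>e. flag_prod e (2 ^ rX, 2 ^ rU, 2 ^ rV)"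
  let ?NZ = "- {(False, False, False)}"
  have p_nonneg: "0 \<le> ?p t * ?p t'" for t t'
    by (simp add: P_typ_nonneg)
  have mass_squared: "(typ_mass z)\<^sup>2 = (\<Sum>t\<in>Src. \<Sum>t'\<in>Src. ?p t * ?p t')"
    unfolding typ_mass_def power2_eq_square sum_product ..
  have "(\<Sum>g\<in>Fam. \<Sum>y\<in>Out. (typ_hash g y z - typ_mass z / card Out)\<^sup>2)
      \<le> (\<Sum>t\<in>Src. \<Sum>t'\<in>Src. ?p t * ?p t' * (?c * ?fp (coincide t t'))) - ?c * (typ_mass z)\<^sup>2"
    unfolding sum_typ_hash_deviation_squared_eq
    using card_hash3_collisions_le p_nonneg by (intro diff_right_mono sum_mono mult_left_mono) auto
  also have "\<dots> = ?c * (\<Sum>t\<in>Src. \<Sum>t'\<in>Src. ?p t * ?p t' * (?fp (coincide t t') - 1))"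
    unfolding mass_squared by (simp add: sum_distrib_left sum_subtractf algebra_simps)
  also have "\<dots> \<le> ?c * (\<Sum>t\<in>Src. \<Sum>t'\<in>Src. ?p t * ?p t' * (\<Sum>e\<in>?NZ. if agree e t t' then ?fp e else 0))"
  proof (rule mult_left_mono, intro sum_mono)
    fix t t'
    show "?p t * ?p t' * (?fp (coincide t t') - 1)
        \<le> ?p t * ?p t' * (\<Sum>e\<in>?NZ. if agree e t t' then ?fp e else 0)"
      using flag_prod_coincide_le[of "2 ^ rX" "2 ^ rU" "2 ^ rV" t t'] p_nonneg[of t t']
      by (intro mult_left_mono) simp_all
  qed simp
  also have "\<dots> = ?c * (\<Sum>t\<in>Src. ?p t * (\<Sum>e\<in>?NZ. ?fp e * (\<Sum>t'\<in>Src. if agree e t t' then ?p t' else 0)))"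
    by (simp add: sum_distrib_left sum.swap[of _ ?NZ] mult_ac if_distrib cong: if_cong)
  also have "\<dots> \<le> ?c * (\<Sum>t\<in>Src. ?p t * (7 * 2 powr - \<theta> * QZ z))"
    using sum_nonzero_flags_agree_le by (intro mult_left_mono sum_mono) (auto simp: P_typ_nonneg)
  also have "\<dots> = ?c * (7 * 2 powr - \<theta> * QZ z * typ_mass z)"
    by (simp add: typ_mass_def sum_distrib_left mult_ac)
  finally show ?thesis .
qed

lemma typ_hash_deviation_le:
  "(\<Sum>g\<in>Fam. \<Sum>y\<in>Out. \<bar>typ_hash g y z - typ_mass z / card Out\<bar>)
    \<le> card Fam * (sqrt 7 * 2 powr (- \<theta> / 2)) * (QZ z + typ_mass z) / 2"
proof (cases "QZ z = 0")
  case True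
  then have "typ_mass z = 0" "\<And>g y. typ_hash g y z = 0"
    using typ_mass_nonneg[of z] typ_mass_le_QZ[of z] typ_hash_nonneg typ_hash_le_typ_mass
    by (metis order_antisym)+
  with True show ?thesis
    by simp
next
  case False
  let ?\<mu> = "sqrt 7 * 2 powr (- \<theta> / 2)" and ?R = "real (card Out)"
  have R_pos: "0 < ?R"
    using card_Out by simp
  have \<mu>_squared: "?\<mu>\<^sup>2 = 7 * 2 powr - \<theta>"
    by (simp add: power_mult_distrib powr_power)
  define W where "W = ?\<mu> * QZ z / ?R"
  have "0 < W"
    using False QZ_nonneg[of z] R_pos by (simp add: W_def)
  have "(\<Sum>g\<in>Fam. \<Sum>y\<in>Out. \<bar>typ_hash g y z - typ_mass z / ?R\<bar>)
      \<le> (\<Sum>g\<in>Fam. \<Sum>y\<in>Out. W / 2 + (typ_hash g y z - typ_mass z / ?R)\<^sup>2 / (2 * W))"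
    by (intro sum_mono abs_le_half_plus_square \<open>0 < W\<close>)
  also have "\<dots> = card Fam * ?R * W / 2
      + (\<Sum>g\<in>Fam. \<Sum>y\<in>Out. (typ_hash g y z - typ_mass z / ?R)\<^sup>2) / (2 * W)"
    by (simp add: sum.distrib sum_divide_distrib)
  also have "\<dots> \<le> card Fam * ?R * W / 2
      + card Fam / ?R * (?\<mu>\<^sup>2 * QZ z * typ_mass z) / (2 * W)"
    unfolding \<mu>_squared using typ_hash_deviation_squared_le[of z] \<open>0 < W\<close>
    by (intro add_left_mono divide_right_mono) auto
  also have "\<dots> = card Fam * ?\<mu> * (QZ z + typ_mass z) / 2"
    using R_pos False by (simp add: W_def power2_eq_square field_simps)
  finally show ?thesis .
qed

lemma hashed_mass_deviation_le:
  "\<bar>hashed_mass y z - QZ z / card Out\<bar>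
    \<le> (\<Sum>g\<in>Fam. \<bar>typ_hash g y z - typ_mass z / card Out\<bar>) / card Fam
      + (\<Sum>g\<in>Fam. atyp_hash g y z) / card Fam + atyp_mass z / card Out"
proof -
  have "hashed_mass y z = (\<Sum>g\<in>Fam. typ_hash g y z + atyp_hash g y z) / card Fam"
    unfolding hashed_mass_def typ_hash_def atyp_hash_def
    by (simp add: sum.distrib[symmetric] P_typ_plus_P_atyp if_distrib cong: if_cong)
  moreover have "QZ z = typ_mass z + atyp_mass z"
    unfolding QZ_eq_sum_Src typ_mass_def atyp_mass_def
    by (simp add: sum.distrib[symmetric] P_typ_plus_P_atyp)
  ultimately have deviation_split: "hashed_mass y z - QZ z / card Out
      = (\<Sum>g\<in>Fam. typ_hash g y z - typ_mass z / card Out) / card Fam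
        + (\<Sum>g\<in>Fam. atyp_hash g y z) / card Fam - atyp_mass z / card Out"
    using card_Fam_pos by (simp add: sum.distrib sum_subtractf add_divide_distrib diff_divide_distrib)
  have "0 \<le> (\<Sum>g\<in>Fam. atyp_hash g y z) / card Fam" "0 \<le> atyp_mass z / card Out"
    unfolding atyp_hash_def atyp_mass_def
    by (auto intro!: sum_nonneg divide_nonneg_nonneg simp: P_atyp_nonneg)
  moreover have "\<bar>(\<Sum>g\<in>Fam. typ_hash g y z - typ_mass z / card Out) / card Fam\<bar>
      \<le> (\<Sum>g\<in>Fam. \<bar>typ_hash g y z - typ_mass z / card Out\<bar>) / card Fam"
    unfolding abs_divide abs_of_nat by (intro divide_right_mono sum_abs) simp
  moreover have "\<bar>a + b - c\<bar> \<le> a' + b + c" if "0 \<le> b" "0 \<le> c" "\<bar>a\<bar> \<le> a'" for a b c a' :: real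
    using that by arith
  ultimately show ?thesis
    unfolding deviation_split by blast
qed

lemma sum_typ_hash_deviation_le:
  "(\<Sum>y\<in>Out. \<Sum>z\<in>Zs. (\<Sum>g\<in>Fam. \<bar>typ_hash g y z - typ_mass z / card Out\<bar>) / card Fam)
    \<le> sqrt 7 * 2 powr (- \<theta> / 2)"
proof -
  let ?\<mu> = "sqrt 7 * 2 powr (- \<theta> / 2)" and ?F = "real (card Fam)"
  have F_pos: "0 < ?F"
    using card_Fam_pos by simp
  have "(\<Sum>y\<in>Out. \<Sum>z\<in>Zs. (\<Sum>g\<in>Fam. \<bar>typ_hash g y z - typ_mass z / card Out\<bar>) / ?F)
      = (\<Sum>z\<in>Zs. \<Sum>g\<in>Fam. \<Sum>y\<in>Out. \<bar>typ_hash g y z - typ_mass z / card Out\<bar>) / ?F"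
    unfolding sum_divide_distrib[symmetric] by (subst sum_rotate3) (rule refl)
  also have "\<dots> \<le> (\<Sum>z\<in>Zs. ?F * ?\<mu> * (QZ z + typ_mass z) / 2) / ?F"
    using F_pos by (intro divide_right_mono sum_mono typ_hash_deviation_le) auto
  also have "\<dots> = ?\<mu> * ((\<Sum>z\<in>Zs. QZ z) + (\<Sum>z\<in>Zs. typ_mass z)) / 2"
    using F_pos by (simp add: sum.distrib sum_divide_distrib[symmetric] sum_distrib_left[symmetric])
  also have "\<dots> \<le> ?\<mu>"
    using sum_mono[of Zs typ_mass QZ, OF typ_mass_le_QZ] by (simp add: sum_QZ)
  finally show ?thesis .
qed

lemma sum_atyp_hash:
  "(\<Sum>y\<in>Out. \<Sum>z\<in>Zs. (\<Sum>g\<in>Fam. atyp_hash g y z) / card Fam) = (\<Sum>z\<in>Zs. atyp_mass z)"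
proof -
  have "(\<Sum>y\<in>Out. \<Sum>z\<in>Zs. (\<Sum>g\<in>Fam. atyp_hash g y z) / card Fam)
      = (\<Sum>z\<in>Zs. \<Sum>g\<in>Fam. \<Sum>y\<in>Out. atyp_hash g y z) / card Fam"
    unfolding sum_divide_distrib[symmetric] by (subst sum_rotate3) (rule refl)
  also have "\<dots> = (\<Sum>z\<in>Zs. atyp_mass z)"
    using card_Fam_pos
    by (simp add: atyp_hash_def sum_Out_hash atyp_mass_def sum_distrib_left[symmetric])
  finally show ?thesis .
qed

lemma sum_atyp_mass: "(\<Sum>z\<in>Zs. atyp_mass z) = (\<Sum>w\<in>Src \<times> Zs. P_atyp w)"
  unfolding atyp_mass_def by (subst sum.swap) (simp add: sum.cartesian_product)

theorem hashed_mass_total_deviation_le: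
  "(\<Sum>(e, d, f, z)\<in>Ox \<times> Ou \<times> Ov \<times> Zs. \<bar>hashed_mass (e, d, f) z - QZ z / card Out\<bar>)
    \<le> 2 * (\<Sum>w\<in>Src \<times> Zs. P_atyp w) + sqrt 7 * 2 powr (- \<theta> / 2)"
proof -
  let ?R = "real (card Out)" and ?F = "real (card Fam)"
  let ?D = "\<lambda>y z. (\<Sum>g\<in>Fam. \<bar>typ_hash g y z - typ_mass z / ?R\<bar>) / ?F"
  let ?B = "\<lambda>y z. (\<Sum>g\<in>Fam. atyp_hash g y z) / ?F"
  have "(\<Sum>(e, d, f, z)\<in>Ox \<times> Ou \<times> Ov \<times> Zs. \<bar>hashed_mass (e, d, f) z - QZ z / ?R\<bar>)
      = (\<Sum>y\<in>Out. \<Sum>z\<in>Zs. \<bar>hashed_mass y z - QZ z / ?R\<bar>)"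
    unfolding Out_def by (rule sum_quadruple)
  also have "\<dots> \<le> (\<Sum>y\<in>Out. \<Sum>z\<in>Zs. ?D y z + ?B y z + atyp_mass z / ?R)"
    by (intro sum_mono hashed_mass_deviation_le)
  also have "\<dots> = (\<Sum>y\<in>Out. \<Sum>z\<in>Zs. ?D y z) + (\<Sum>y\<in>Out. \<Sum>z\<in>Zs. ?B y z)
      + (\<Sum>y\<in>Out. \<Sum>z\<in>Zs. atyp_mass z / ?R)"
    by (simp only: sum.distrib)
  also have "(\<Sum>y\<in>Out. \<Sum>z\<in>Zs. atyp_mass z / ?R) = (\<Sum>z\<in>Zs. atyp_mass z)"
    using card_Out by (simp add: sum_divide_distrib[symmetric])
  finally show ?thesis
    using sum_typ_hash_deviation_le unfolding sum_atyp_hash sum_atyp_mass by linarith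
qed

end

definition split_sample ::
  "(bool \<times> bool \<times> bool \<times> 'z) list \<Rightarrow> (bool list \<times> bool list \<times> bool list) \<times> 'z list" where
  "split_sample s = ((map compX s, map compU s, map compV s), map compZ s)"

definition join_sample ::
  "(bool list \<times> bool list \<times> bool list) \<times> 'z list \<Rightarrow> (bool \<times> bool \<times> bool \<times> 'z) list" where
  "join_sample w = (case w of ((xs, us, vs), zs) \<Rightarrow> zip xs (zip us (zip vs zs)))"

text \<open>Since \<open>zip\<close> truncates, \<open>sample_dist q\<close> is the law of \<open>(X^N, U^N, V^N, Z^N)\<close> only on
  quadruples of strings of a common length \<open>N\<close>; the lemmas below are restricted accordingly.\<close>

definition sample_dist ::
  "(bool \<times> bool \<times> bool \<times> 'z \<Rightarrow> real) \<Rightarrow> (bool list \<times> bool list \<times> bool list) \<times> 'z list \<Rightarrow> real"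
  where
  "sample_dist q w = iid q (join_sample w)"

lemma join_split_sample: "join_sample (split_sample s) = s"
  by (induction s) (auto simp: join_sample_def split_sample_def compX_def compU_def compV_def compZ_def)

lemma split_join_sample:
  "length xs = length zs \<Longrightarrow> length us = length zs \<Longrightarrow> length vs = length zs \<Longrightarrow>
    split_sample (join_sample ((xs, us, vs), zs)) = ((xs, us, vs), zs)"
proof (induction zs arbitrary: xs us vs)
  case (Cons z zs)
  then show ?case
    by (cases xs; cases us; cases vs)
      (auto simp: join_sample_def split_sample_def compX_def compU_def compV_def compZ_def)
qed (simp add: join_sample_def split_sample_def)

lemma sum_samples_split:
  "(\<Sum>w\<in>(bitstrings N \<times> bitstrings N \<times> bitstrings N) \<times> {zs. length zs = N}. F w)
    = (\<Sum>s | length s = N. F (split_sample s))"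
proof (rule sum.reindex_bij_witness[of _ split_sample join_sample])
  show "split_sample s \<in> (bitstrings N \<times> bitstrings N \<times> bitstrings N) \<times> {zs. length zs = N}"
    if "s \<in> {s. length s = N}" for s
    using that by (simp add: split_sample_def bitstrings_def)
  show "join_sample w \<in> {s. length s = N}"
    if "w \<in> (bitstrings N \<times> bitstrings N \<times> bitstrings N) \<times> {zs. length zs = N}" for w
    using that by (auto simp: join_sample_def bitstrings_def)
qed (auto simp: join_split_sample split_join_sample bitstrings_def)

locale iid_hashing =
  fixes q :: "bool \<times> bool \<times> bool \<times> 'z::finite \<Rightarrow> real" and N rX rU rV :: nat and \<theta> :: real
    and FX FU FV :: "(bool list \<Rightarrow> bool list) set"
  assumes pmf: "is_pmf q"
    and two_universal_X: "two_universal N rX FX"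
    and two_universal_U: "two_universal N rU FU"
    and two_universal_V: "two_universal N rV FV"
    and \<theta>_nonneg: "0 \<le> \<theta>"

sublocale iid_hashing \<subseteq> three_universal_hashing "bitstrings N" "bitstrings N" "bitstrings N"
  "{zs. length zs = N}" "bitstrings rX" "bitstrings rU" "bitstrings rV" FX FU FV rX rU rV \<theta>
  "sample_dist q"
proof
  have "0 \<le> q w" for w
    using pmf unfolding is_pmf_def by blast
  then show "0 \<le> sample_dist q w" for w
    unfolding sample_dist_def iid_def by (intro prod_list_nonneg) auto
  show "(\<Sum>w\<in>(bitstrings N \<times> bitstrings N \<times> bitstrings N) \<times> {zs. length zs = N}. sample_dist q w) = 1"
    using pmf
    by (simp add: sum_samples_split sample_dist_def join_split_sample iid_def
        sum_prod_list_lists_length is_pmf_def)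
  show "universal_family (bitstrings N) (bitstrings rX) rX FX"
    "universal_family (bitstrings N) (bitstrings rU) rU FU"
    "universal_family (bitstrings N) (bitstrings rV) rV FV"
    using two_universal_X two_universal_U two_universal_V
    by (simp_all add: two_universal_imp_universal_family)
qed (auto simp: bitstrings_def finite_lists_length \<theta>_nonneg)

context iid_hashing
begin

lemma sample_dist_split_sample: "sample_dist q (split_sample s) = iid q s"
  by (simp add: sample_dist_def join_split_sample)

lemma sum_sample_dist_fiber:
  assumes "length y = N"
    and fiber: "\<And>t. C (split_sample t) \<longleftrightarrow> map h t = y"
  shows "(\<Sum>w\<in>Src \<times> {zs. length zs = N}. if C w then sample_dist q w else 0) = iid (prob_of q h) y"
proof -
  have "(\<Sum>w\<in>Src \<times> {zs. length zs = N}. if C w then sample_dist q w else 0)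
      = (\<Sum>t | length t = N. if C (split_sample t) then sample_dist q (split_sample t) else 0)"
    unfolding Src_def by (rule sum_samples_split)
  also have "\<dots> = (\<Sum>t | length t = N. if map h t = y then iid q t else 0)"
    by (simp only: fiber sample_dist_split_sample)
  also have "\<dots> = (\<Sum>t | length t = N \<and> map h t = y. iid q t)"
    by (simp add: sum.inter_filter[symmetric] finite_lists_length conj_commute)
  finally show ?thesis
    using assms(1) by (simp add: sum_iid_fiber)
qed

lemma QXUZ_split_sample:
  assumes "length s = N"
    and "\<And>t. map h t = map h s
      \<longleftrightarrow> map compX t = map compX s \<and> map compU t = map compU s \<and> map compZ t = map compZ s"
  shows "QXUZ (map compX s) (map compU s) (map compZ s) = prod_list (map (\<lambda>w. prob_of q h (h w)) s)"
proof -
  have "map compX s \<in> bitstrings N" "map compU s \<in> bitstrings N" "map compZ s \<in> {zs. length zs = N}"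
    using assms(1) by (simp_all add: bitstrings_def)
  then have "QXUZ (map compX s) (map compU s) (map compZ s) = (\<Sum>w\<in>Src \<times> {zs. length zs = N}.
      if (case w of ((x', u', v), z') \<Rightarrow> (x', u', z') = (map compX s, map compU s, map compZ s))
      then sample_dist q w else 0)"
    by (rule QXUZ_eq_filter)
  also have "\<dots> = iid (prob_of q h) (map h s)"
    using assms by (intro sum_sample_dist_fiber) (auto simp: split_sample_def)
  finally show ?thesis
    by (simp add: iid_def comp_def)
qed

lemma QUZ_split_sample:
  assumes "length s = N"
    and "\<And>t. map h t = map h s \<longleftrightarrow> map compU t = map compU s \<and> map compZ t = map compZ s"
  shows "QUZ (map compU s) (map compZ s) = prod_list (map (\<lambda>w. prob_of q h (h w)) s)"
proof -
  have "map compU s \<in> bitstrings N" "map compZ s \<in> {zs. length zs = N}"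
    using assms(1) by (simp_all add: bitstrings_def)
  then have "QUZ (map compU s) (map compZ s) = (\<Sum>w\<in>Src \<times> {zs. length zs = N}.
      if (case w of ((x, u', v), z') \<Rightarrow> (u', z') = (map compU s, map compZ s))
      then sample_dist q w else 0)"
    by (rule QUZ_eq_filter)
  also have "\<dots> = iid (prob_of q h) (map h s)"
    using assms by (intro sum_sample_dist_fiber) (auto simp: split_sample_def)
  finally show ?thesis
    by (simp add: iid_def comp_def)
qed

lemma QZ_eq_iid:
  assumes "length zs = N"
  shows "QZ zs = iid (prob_of q compZ) zs"
proof -
  have "QZ zs = (\<Sum>w\<in>Src \<times> {zs. length zs = N}. if snd w = zs then sample_dist q w else 0)"
    using assms by (intro QZ_eq_filter) simp
  also have "\<dots> = iid (prob_of q compZ) zs"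
    using assms by (intro sum_sample_dist_fiber) (auto simp: split_sample_def)
  finally show ?thesis .
qed

lemma hashed_dist_eq:
  assumes "length zs = N"
  shows "hashed_dist N q FX FU FV (e, d, f, zs) = hashed_mass (e, d, f) zs"
proof -
  have "(\<Sum>s | length s = N. if gX (map compX s) = e \<and> gU (map compU s) = d \<and> gV (map compV s) = f
          \<and> map compZ s = zs then iid q s else 0)
      = (\<Sum>t\<in>Src. if hash3 (gX, gU, gV) t = (e, d, f) then sample_dist q (t, zs) else 0)" for gX gU gV
  proof -
    have "(\<Sum>t\<in>Src. if hash3 (gX, gU, gV) t = (e, d, f) then sample_dist q (t, zs) else 0)
        = (\<Sum>w\<in>Src \<times> {zs. length zs = N}. if hash3 (gX, gU, gV) (fst w) = (e, d, f) \<and> snd w = zs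
            then sample_dist q w else 0)"
      using assms
      by (simp add: sum.cartesian_product' sum_if_const if_conj_zero finite_lists_length cong: if_cong)
    also have "\<dots> = (\<Sum>s | length s = N. if gX (map compX s) = e \<and> gU (map compU s) = d
        \<and> gV (map compV s) = f \<and> map compZ s = zs then iid q s else 0)"
      unfolding Src_def sum_samples_split
      by (simp only: sample_dist_split_sample cong: if_cong) (simp add: split_sample_def hash3_def)
    finally show ?thesis ..
  qed
  then show ?thesis
    by (simp add: hashed_dist_def hashed_mass_def Fam_def sum.cartesian_product' card_cartesian_product)
qed

lemma ideal_dist_eq:
  assumes "e \<in> bitstrings rX" "d \<in> bitstrings rU" "f \<in> bitstrings rV" "length zs = N"
  shows "ideal_dist N q rX rU rV (e, d, f, zs) = QZ zs / card Out"
  using assms by (simp add: ideal_dist_def QZ_eq_iid card_Out)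

lemma var_dist_eq:
  "var_dist (hashed_dist N q FX FU FV) (ideal_dist N q rX rU rV)
      (bitstrings rX \<times> bitstrings rU \<times> bitstrings rV \<times> {zs. length zs = N})
    = (\<Sum>(e, d, f, z)\<in>bitstrings rX \<times> bitstrings rU \<times> bitstrings rV \<times> {zs. length zs = N}.
        \<bar>hashed_mass (e, d, f) z - QZ z / card Out\<bar>)"
  unfolding var_dist_def
proof (rule sum.cong[OF refl])
  fix w :: "bool list \<times> bool list \<times> bool list \<times> 'z list"
  assume "w \<in> bitstrings rX \<times> bitstrings rU \<times> bitstrings rV \<times> {zs. length zs = N}"
  then obtain e d f zs where "w = (e, d, f, zs)" "e \<in> bitstrings rX" "d \<in> bitstrings rU"
    "f \<in> bitstrings rV" "length zs = N"
    by auto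
  then show "\<bar>hashed_dist N q FX FU FV w - ideal_dist N q rX rU rV w\<bar>
      = (case w of (e, d, f, z) \<Rightarrow> \<bar>hashed_mass (e, d, f) z - QZ z / card Out\<bar>)"
    by (simp only: hashed_dist_eq ideal_dist_eq prod.case)
qed

lemma typical_split_sample:
  "typical (split_sample s) \<longleftrightarrow> typX (map compX s) (map compU s) (map compZ s)
    \<and> typU (map compU s) (map compZ s) \<and> typV (map compX s) (map compU s) (map compV s) (map compZ s)"
  by (simp add: typical_def split_sample_def)

lemma iid_not_typX_le:
  assumes "1 \<le> N" "real rX + \<theta> = real N * (cond_entropy q compX (\<lambda>w. (compU w, compZ w)) - delta_A N)"
  shows "(\<Sum>s | length s = N \<and> \<not> typX (map compX s) (map compU s) (map compZ s). iid q s) \<le> exp (- 3) / N"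
proof -
  interpret C: cond_pmf q compX "\<lambda>w. (compU w, compZ w)"
    by unfold_locales (rule pmf)
  have "\<not> typX (map compX s) (map compU s) (map compZ s)
      \<longleftrightarrow> 2 powr - (real N * (cond_entropy q compX (\<lambda>w. (compU w, compZ w)) - delta_A N))
          * prod_list (map (\<lambda>w. C.marg (compU w, compZ w)) s)
        < prod_list (map (\<lambda>w. C.joint (compX w, compU w, compZ w)) s)"
    if "length s = N" for s
    using QXUZ_split_sample[OF that, of "\<lambda>w. (compX w, compU w, compZ w)"]
      QUZ_split_sample[OF that, of "\<lambda>w. (compU w, compZ w)"] assms(2)
    by (simp add: typX_def aX_def C.joint_def C.marg_def map_pair_eq_iff not_le)
  then show ?thesis
    using C.iid_joint_tail_le[OF assms(1)] by (simp cong: conj_cong)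
qed

lemma iid_not_typU_le:
  assumes "1 \<le> N" "real rU + \<theta> = real N * (cond_entropy q compU compZ - delta_A N)"
  shows "(\<Sum>s | length s = N \<and> \<not> typU (map compU s) (map compZ s). iid q s) \<le> exp (- 3) / N"
proof -
  interpret C: cond_pmf q compU compZ
    by unfold_locales (rule pmf)
  have "\<not> typU (map compU s) (map compZ s)
      \<longleftrightarrow> 2 powr - (real N * (cond_entropy q compU compZ - delta_A N))
          * prod_list (map (\<lambda>w. C.marg (compZ w)) s) < prod_list (map (\<lambda>w. C.joint (compU w, compZ w)) s)"
    if "length s = N" for s
    using QUZ_split_sample[OF that, of "\<lambda>w. (compU w, compZ w)"] QZ_eq_iid[of "map compZ s"] that assms(2)
    by (simp add: typU_def aU_def C.joint_def C.marg_def map_pair_eq_iff not_le iid_def comp_def)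
  then show ?thesis
    using C.iid_joint_tail_le[OF assms(1)] by (simp cong: conj_cong)
qed

lemma iid_not_typV_le:
  assumes "1 \<le> N"
    "real rV + \<theta> = real N * (cond_entropy q compV (\<lambda>w. (compU w, compZ w, compX w)) - delta_A N)"
  shows "(\<Sum>s | length s = N \<and> \<not> typV (map compX s) (map compU s) (map compV s) (map compZ s). iid q s)
    \<le> exp (- 3) / N"
proof -
  interpret C: cond_pmf q compV "\<lambda>w. (compU w, compZ w, compX w)"
    by unfold_locales (rule pmf)
  have "inj (\<lambda>w. (compV w, compU w, compZ w, compX w))"
    by (auto intro!: injI simp: compX_def compU_def compV_def compZ_def prod_eq_iff)
  then have joint_eq: "C.joint (compV w, compU w, compZ w, compX w) = q w" for w
    unfolding C.joint_def by (rule prob_of_injective)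
  have "\<not> typV (map compX s) (map compU s) (map compV s) (map compZ s)
      \<longleftrightarrow> 2 powr - (real N * (cond_entropy q compV (\<lambda>w. (compU w, compZ w, compX w)) - delta_A N))
          * prod_list (map (\<lambda>w. C.marg (compU w, compZ w, compX w)) s)
        < prod_list (map (\<lambda>w. C.joint (compV w, compU w, compZ w, compX w)) s)"
    if "length s = N" for s
  proof -
    have "QXUZ (map compX s) (map compU s) (map compZ s)
        = prod_list (map (\<lambda>w. C.marg (compU w, compZ w, compX w)) s)"
      unfolding C.marg_def by (rule QXUZ_split_sample[OF that]) (auto simp: map_pair_eq_iff)
    then show ?thesis
      using sample_dist_split_sample[of s] assms(2)
      by (simp add: typV_def aV_def joint_eq not_le iid_def split_sample_def)
  qed
  then show ?thesis
    using C.iid_joint_tail_le[OF assms(1)] by (simp cong: conj_cong)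
qed

lemma sum_P_atyp_le:
  assumes "1 \<le> N"
    and "real rX + \<theta> = real N * (cond_entropy q compX (\<lambda>w. (compU w, compZ w)) - delta_A N)"
    and "real rU + \<theta> = real N * (cond_entropy q compU compZ - delta_A N)"
    and "real rV + \<theta> = real N * (cond_entropy q compV (\<lambda>w. (compU w, compZ w, compX w)) - delta_A N)"
  shows "(\<Sum>w\<in>Src \<times> {zs. length zs = N}. P_atyp w) \<le> 1 / N"
proof -
  let ?X = "\<lambda>s. typX (map compX s) (map compU s) (map compZ s)"
  let ?U = "\<lambda>s. typU (map compU s) (map compZ s)"
  let ?V = "\<lambda>s. typV (map compX s) (map compU s) (map compV s) (map compZ s)"
  have "P_atyp (split_sample s)
      \<le> (if \<not> ?X s then iid q s else 0) + (if \<not> ?U s then iid q s else 0)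
        + (if \<not> ?V s then iid q s else 0)" for s
    using P_nonneg[of "split_sample s"]
    by (auto simp: P_atyp_def typical_split_sample sample_dist_split_sample)
  then have "(\<Sum>w\<in>Src \<times> {zs. length zs = N}. P_atyp w)
      \<le> (\<Sum>s | length s = N. if \<not> ?X s then iid q s else 0)
        + (\<Sum>s | length s = N. if \<not> ?U s then iid q s else 0)
        + (\<Sum>s | length s = N. if \<not> ?V s then iid q s else 0)"
    unfolding Src_def sum_samples_split sum.distrib[symmetric] by (rule sum_mono)
  also have "\<dots> = (\<Sum>s | length s = N \<and> \<not> ?X s. iid q s) + (\<Sum>s | length s = N \<and> \<not> ?U s. iid q s)
      + (\<Sum>s | length s = N \<and> \<not> ?V s. iid q s)"
    by (simp add: sum.inter_filter[symmetric] finite_lists_length conj_commute)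
  also have "\<dots> \<le> 3 * exp (- 3) / N"
    using iid_not_typX_le[OF assms(1,2)] iid_not_typU_le[OF assms(1,3)] iid_not_typV_le[OF assms(1,4)]
    by simp
  also have "\<dots> \<le> 1 / N"
  proof (rule divide_right_mono)
    show "3 * exp (- 3) \<le> (1::real)"
      using exp_ge_add_one_self[of 3] by (simp add: exp_minus field_simps)
  qed simp
  finally show ?thesis .
qed

end

theorem lemma2:
  fixes q :: "bool \<times> bool \<times> bool \<times> 'z::finite \<Rightarrow> real"
    and N rX rU rV :: nat and \<xi> :: real
    and FX FU FV :: "(bool list \<Rightarrow> bool list) set"
  assumes "is_pmf q"
    and "N \<ge> 1"
    and "\<xi> > 0"
    and "real rX = real N * (cond_entropy q compX (\<lambda>w. (compU w, compZ w))
                             - 2 * (delta_A N + \<xi>) / 2)"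
    and "real rU = real N * (cond_entropy q compU compZ - 2 * (delta_A N + \<xi>) / 2)"
    and "real rV = real N * (cond_entropy q compV (\<lambda>w. (compU w, compZ w, compX w))
                             - 2 * (delta_A N + \<xi>) / 2)"
    and "two_universal N rX FX"
    and "two_universal N rU FU"
    and "two_universal N rV FV"
  shows "var_dist (hashed_dist N q FX FU FV) (ideal_dist N q rX rU rV)
           (bitstrings rX \<times> bitstrings rU \<times> bitstrings rV \<times> {zs. length zs = N})
         \<le> 2 / real N + sqrt 7 * 2 powr (- real N * \<xi> / 2)"
proof -
  interpret iid_hashing q N rX rU rV "real N * \<xi>" FX FU FV
    using assms by unfold_locales simp_all
  have "(\<Sum>w\<in>Src \<times> {zs. length zs = N}. P_atyp w) \<le> 1 / N"
    using assms(2,4-6) by (intro sum_P_atyp_le) (simp_all add: field_simps)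
  then show ?thesis
    using hashed_mass_total_deviation_le by (simp add: var_dist_eq Out_def)
qed

end
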